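(* Let $\mathcal N=\mathbb N$ or $\mathcal N=\{1,\dots,n\}$ with $n\ge2$, and let $\mathbf c=(c_i)_{i\in\mathcal N}$ be real numbers with $\inf_{i\in\mathcal N}c_i>0$. Let $\mathcal P$ be the set of sequences $\mathbf p=(p_i)_{i\in\mathcal N}$ with $p_i\ge0$, $\sum_i p_i=1$, $\sum_i p_ic_i<\infty$, and for $\mathbf p\in\mathcal P$ let $$H(\mathbf p)=-\Big(\sum_{i\in\mathcal N}p_i\log p_i\Big)\Big(\sum_{i\in\mathcal N}p_ic_i\Big)^{-1}\in[0,+\infty]$$ (with $0\log0=0$). If $\mathbf p\in\mathcal P$ satisfies $p_k=0$ for some $k\in\mathcal N$, then there exists $\mathbf p'\in\mathcal P$ with $p'_i>0$ for all $i\in\mathcal N$ such that $H(\mathbf p')\ge H(\mathbf p)$, and the inequality is strict when $H(\mathbf p)<\infty$. *)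

theory Defs
  imports "HOL-Analysis.Analysis"
begin

definition admissible_index :: "nat set \<Rightarrow> bool" where
  "admissible_index I \<longleftrightarrow> I = UNIV \<or> (\<exists>n::nat. n \<ge> 2 \<and> I = {1..n})"

definition plogp :: "real \<Rightarrow> real" where
  "plogp x = (if x = 0 then 0 else x * ln x)"

definition probP :: "nat set \<Rightarrow> (nat \<Rightarrow> real) \<Rightarrow> (nat \<Rightarrow> real) \<Rightarrow> bool" where
  "probP I c p \<longleftrightarrow> (\<forall>i\<in>I. p i \<ge> 0) \<and> (p has_sum 1) I \<and> (\<lambda>i. p i * c i) summable_on I"

definition entropy :: "nat set \<Rightarrow> (nat \<Rightarrow> real) \<Rightarrow> ennreal" where
  "entropy I p = (\<Sum>\<^sub>\<infinity>i\<in>I. ennreal (- plogp (p i)))"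

definition Hrate :: "nat set \<Rightarrow> (nat \<Rightarrow> real) \<Rightarrow> (nat \<Rightarrow> real) \<Rightarrow> ennreal" where
  "Hrate I c p = entropy I p / ennreal (\<Sum>\<^sub>\<infinity>i\<in>I. p i * c i)"

end

theory Submission
  imports Defs
begin

text \<open>
  Mix \<open>p\<close> with a strictly positive \<open>q \<in> P\<close>: \<open>p' = (1 - t) p + t q\<close> lies in \<open>P\<close> and is
  strictly positive. By convexity of \<open>x log x\<close> the entropy of \<open>p'\<close> is at least \<open>(1 - t)\<close>
  times that of \<open>p\<close>, plus the contribution \<open>- t q\<^sub>k log (t q\<^sub>k) \<ge> q\<^sub>k t log (1/t)\<close> of
  the coordinate \<open>k\<close> with \<open>p\<^sub>k = 0\<close>. The cost only changes linearly, to \<open>(1 - t) C + t D\<close>.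
  Since \<open>log (1/t) \<rightarrow> \<infinity>\<close>, the ratio strictly increases for small \<open>t\<close>; if the entropy of \<open>p\<close>
  is infinite, so is that of \<open>p'\<close>.
\<close>

lemma infsum_cmult_right_ennreal:
  fixes f :: "'a \<Rightarrow> ennreal"
  assumes "c < \<infinity>"
  shows "(\<Sum>\<^sub>\<infinity>x\<in>A. c * f x) = c * (\<Sum>\<^sub>\<infinity>x\<in>A. f x)"
proof -
  have "c < top" using assms by (simp add: infinity_ennreal_def)
  moreover have "(sum f \<longlongrightarrow> infsum f A) (finite_subsets_at_top A)"
    using has_sum_infsum[of f A, OF nonneg_summable_on_complete] unfolding has_sum_def by simp
  ultimately have "((\<lambda>X. c * sum f X) \<longlongrightarrow> c * infsum f A) (finite_subsets_at_top A)"
    by (rule ennreal_tendsto_cmult)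
  then have "((\<lambda>i. c * f i) has_sum (c * infsum f A)) A"
    unfolding has_sum_def by (simp add: sum_distrib_left)
  then show ?thesis by (rule infsumI)
qed

lemma plogp_ge_tangent:
  assumes "0 < a" "0 \<le> x"
  shows "x * ln a + x - a \<le> plogp x"
proof (cases "x = 0")
  case True
  then show ?thesis using assms by (simp add: plogp_def)
next
  case False
  with assms have "0 < x" by simp
  have "ln (a / x) \<le> a / x - 1" using assms \<open>0 < x\<close> by (intro ln_le_minus_one) simp
  then have "x * ln (a / x) \<le> a - x" using \<open>0 < x\<close> by (simp add: field_simps)
  then show ?thesis using assms \<open>0 < x\<close> by (simp add: plogp_def ln_div algebra_simps)
qed

lemma plogp_convex:
  assumes "0 \<le> x" "0 \<le> y" "0 \<le> t" "t \<le> 1"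
  shows "plogp ((1 - t) * x + t * y) \<le> (1 - t) * plogp x + t * plogp y"
proof (cases "(1 - t) * x + t * y = 0")
  case True
  with assms have "(1 - t) * x = 0" "t * y = 0" by (simp_all add: add_nonneg_eq_0_iff)
  with True show ?thesis by (auto simp: plogp_def)
next
  case False
  define a where "a = (1 - t) * x + t * y"
  have "0 < a" using False assms unfolding a_def by (simp add: order_le_neq_trans)
  have "plogp a = (1 - t) * (x * ln a + x - a) + t * (y * ln a + y - a)"
    using False by (simp add: plogp_def a_def algebra_simps)
  also have "\<dots> \<le> (1 - t) * plogp x + t * plogp y"
    using assms \<open>0 < a\<close> by (intro add_mono mult_left_mono plogp_ge_tangent) auto
  finally show ?thesis unfolding a_def .
qed

lemma plogp_nonpos:
  assumes "0 \<le> x" "x \<le> 1"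
  shows "plogp x \<le> 0"
  using assms by (simp add: plogp_def mult_nonneg_nonpos)

lemma plogp_mult:
  assumes "0 \<le> s" "0 \<le> x"
  shows "plogp (s * x) = x * plogp s + s * plogp x"
  using assms by (auto simp: plogp_def ln_mult algebra_simps)

lemma exists_neg_plogp_gt_linear:
  fixes K :: real
  shows "\<exists>t. 0 < t \<and> t < 1 \<and> t * K < - plogp t"
proof -
  define t where "t = exp (- (max K 0 + 1))"
  have "0 < t" "t < 1" "K < - ln t" by (auto simp: t_def)
  then have "t * K < - plogp t"
    using mult_strict_left_mono[of K "- ln t" t] by (simp add: plogp_def)
  with \<open>0 < t\<close> \<open>t < 1\<close> show ?thesis by blast
qed

definition cost :: "nat set \<Rightarrow> (nat \<Rightarrow> real) \<Rightarrow> (nat \<Rightarrow> real) \<Rightarrow> real" where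
  "cost I c p = (\<Sum>\<^sub>\<infinity>i\<in>I. p i * c i)"

definition mixture :: "real \<Rightarrow> ('a \<Rightarrow> real) \<Rightarrow> ('a \<Rightarrow> real) \<Rightarrow> 'a \<Rightarrow> real" where
  "mixture t p q i = (1 - t) * p i + t * q i"

lemma Hrate_eq_entropy_divide_cost: "Hrate I c p = entropy I p / ennreal (cost I c p)"
  by (simp add: Hrate_def cost_def)

lemma probP_le_one:
  assumes "probP I c p" "i \<in> I"
  shows "p i \<le> 1"
proof -
  have "p summable_on I" "infsum p I = 1" "\<forall>j\<in>I. 0 \<le> p j"
    using assms(1) by (auto simp: probP_def summable_on_def infsumI)
  then have "infsum p {i} \<le> infsum p I"
    using assms(2) by (intro infsum_mono2) auto
  with \<open>infsum p I = 1\<close> show ?thesis by simp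
qed

lemma cost_ge_lower_bound:
  assumes "probP I c p" "\<forall>i\<in>I. m \<le> c i"
  shows "m \<le> cost I c p"
proof -
  have p: "(p has_sum 1) I" "(\<lambda>i. p i * c i) summable_on I" "\<forall>i\<in>I. 0 \<le> p i"
    using assms(1) by (auto simp: probP_def)
  then have "((\<lambda>i. p i * m) has_sum m) I"
    using has_sum_cmult_left[OF p(1), of m] by simp
  then have "m = (\<Sum>\<^sub>\<infinity>i\<in>I. p i * m)" by (simp add: infsumI)
  also have "\<dots> \<le> cost I c p"
    unfolding cost_def using p assms(2) \<open>((\<lambda>i. p i * m) has_sum m) I\<close>
    by (intro infsum_mono) (auto simp: summable_on_def mult_left_mono)
  finally show ?thesis .
qed

lemma probP_mixture:
  assumes "probP I c p" "probP I c q" "0 \<le> t" "t \<le> 1"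
  shows "probP I c (mixture t p q)"
    and "cost I c (mixture t p q) = (1 - t) * cost I c p + t * cost I c q"
proof -
  have p: "(p has_sum 1) I" "((\<lambda>i. p i * c i) has_sum cost I c p) I"
    and q: "(q has_sum 1) I" "((\<lambda>i. q i * c i) has_sum cost I c q) I"
    using assms(1,2) by (auto simp: probP_def cost_def)
  have "(mixture t p q has_sum ((1 - t) * 1 + t * 1)) I"
    unfolding mixture_def by (intro has_sum_add has_sum_cmult_right p q)
  moreover have "(\<lambda>i. mixture t p q i * c i) = (\<lambda>i. (1 - t) * (p i * c i) + t * (q i * c i))"
    by (simp add: mixture_def fun_eq_iff algebra_simps)
  then have "((\<lambda>i. mixture t p q i * c i) has_sum ((1 - t) * cost I c p + t * cost I c q)) I"
    using has_sum_add[OF has_sum_cmult_right[OF p(2)] has_sum_cmult_right[OF q(2)]] by simp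
  moreover have "\<forall>i\<in>I. 0 \<le> mixture t p q i"
    using assms by (auto simp: probP_def mixture_def)
  ultimately show "probP I c (mixture t p q)"
    and "cost I c (mixture t p q) = (1 - t) * cost I c p + t * cost I c q"
    by (auto simp: probP_def cost_def summable_on_def infsumI)
qed

lemma probP_positive_exists:
  assumes "I \<noteq> {}"
  shows "\<exists>q. probP I c q \<and> (\<forall>i\<in>I. 0 < q i)"
proof -
  define g :: "nat \<Rightarrow> real" where "g i = (1/2) ^ i" for i
  define w where "w i = g i / (1 + \<bar>c i\<bar>)" for i
  have w_pos: "0 < w i" for i by (simp add: w_def g_def add_pos_nonneg)
  have "g summable_on UNIV"
    by (subst summable_on_UNIV_nonneg_real_iff) (auto simp: g_def[abs_def] summable_geometric)
  then have g: "g summable_on I" by (rule summable_on_subset_banach) simp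
  have "w i * (1 + \<bar>c i\<bar>) = g i" for i
    by (simp add: w_def add_pos_nonneg)
  then have wg: "w i + w i * \<bar>c i\<bar> = g i" for i
    by (simp add: distrib_left)
  have w_abs: "\<bar>w i * c i\<bar> = w i * \<bar>c i\<bar>" "0 \<le> w i * \<bar>c i\<bar>" for i
    using w_pos[of i] by (simp_all add: abs_mult)
  have w_le: "w i \<le> g i" "\<bar>w i * c i\<bar> \<le> g i" for i
    using wg[of i] w_pos[of i] w_abs[of i] by linarith+
  have w: "w summable_on I"
    by (rule summable_on_comparison_test[OF g]) (simp_all add: w_le less_imp_le w_pos)
  have "(\<lambda>i. \<bar>w i * c i\<bar>) summable_on I"
    by (rule summable_on_comparison_test[OF g]) (simp_all add: w_le)
  then have wc: "(\<lambda>i. w i * c i) summable_on I"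
    using abs_summable_summable[of "\<lambda>i. w i * c i" I] by simp
  define W where "W = infsum w I"
  obtain k where "k \<in> I" using assms by blast
  have "w k \<le> W"
    using infsum_mono2[of w "{k}" I] w \<open>k \<in> I\<close> w_pos by (simp add: W_def less_imp_le)
  with w_pos have "0 < W" by (rule less_le_trans)
  define q where "q i = w i / W" for i
  have "(q has_sum 1) I"
    using has_sum_cmult_right[OF has_sum_infsum[OF w], of "1 / W"] \<open>0 < W\<close>
    by (simp add: q_def[abs_def] W_def)
  moreover have "(\<lambda>i. q i * c i) summable_on I"
    using summable_on_cmult_right[OF wc, of "1 / W"] by (simp add: q_def)
  moreover have "0 < q i" for i using w_pos \<open>0 < W\<close> by (simp add: q_def)
  ultimately show ?thesis by (intro exI[of _ q]) (auto simp: probP_def less_imp_le)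
qed

lemma entropy_mixture_ge:
  assumes "probP I c p" "probP I c q" "k \<in> I" "p k = 0" "0 \<le> t" "t \<le> 1"
  shows "ennreal (1 - t) * entropy I p + ennreal (- q k * plogp t) \<le> entropy I (mixture t p q)"
proof -
  define f where "f i = ennreal (1 - t) * ennreal (- plogp (p i))" for i
  define h where "h i = (if i = k then ennreal (- q k * plogp t) else 0)" for i
  have p_unit: "\<forall>i\<in>I. 0 \<le> p i \<and> p i \<le> 1" and q_unit: "\<forall>i\<in>I. 0 \<le> q i \<and> q i \<le> 1"
    using assms(1,2) probP_le_one by (auto simp: probP_def)
  have "ennreal (1 - t) * entropy I p = infsum f I"
    unfolding f_def entropy_def by (simp add: infsum_cmult_right_ennreal)
  moreover have "ennreal (- q k * plogp t) = infsum h I"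
    using infsum_cong_neutral[of "{k}" I h h] assms(3) by (simp add: h_def)
  moreover have "f i + h i \<le> ennreal (- plogp (mixture t p q i))" if "i \<in> I" for i
  proof (cases "i = k")
    case True
    have "plogp (t * q k) \<le> q k * plogp t"
      using plogp_mult[of t "q k"] plogp_nonpos[of "q k"] q_unit assms
      by (simp add: mult_nonneg_nonpos)
    with True assms(4) show ?thesis
      by (simp add: f_def h_def mixture_def plogp_def ennreal_leI)
  next
    case False
    have "plogp (mixture t p q i) \<le> (1 - t) * plogp (p i) + t * plogp (q i)"
      unfolding mixture_def
      using p_unit q_unit that assms
      by (intro plogp_convex) auto
    moreover have "t * plogp (q i) \<le> 0"
      using plogp_nonpos q_unit that assms
      by (simp add: mult_nonneg_nonpos)
    ultimately have "(1 - t) * - plogp (p i) \<le> - plogp (mixture t p q i)" by simp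
    with False assms show ?thesis
      by (simp add: f_def h_def ennreal_mult'[symmetric] ennreal_leI)
  qed
  then have "infsum (\<lambda>i. f i + h i) I \<le> entropy I (mixture t p q)"
    unfolding entropy_def by (intro infsum_mono) (auto intro: nonneg_summable_on_complete)
  moreover have "infsum (\<lambda>i. f i + h i) I = infsum f I + infsum h I"
    by (rule infsum_add) (auto intro: nonneg_summable_on_complete)
  ultimately show ?thesis by simp
qed

lemma ennreal_divide_less_mixture_divide:
  fixes E E' :: ennreal and C D G t :: real
  assumes "0 < C" "0 \<le> D" "0 \<le> t" "t < 1" "E < \<infinity>"
    and "ennreal (1 - t) * E + ennreal G \<le> E'"
    and "t * enn2real E * D < G * C"
  shows "E / ennreal C < E' / ennreal ((1 - t) * C + t * D)"
proof -
  define e where "e = enn2real E"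
  have E: "E = ennreal e" "0 \<le> e" using assms(5) by (auto simp: e_def less_top)
  have "0 \<le> t * e * D" using assms(2,3) E(2) by simp
  with assms(7) have "0 < G * C" by (simp add: e_def)
  with assms(1) have "0 < G" by (simp add: zero_less_mult_iff)
  have C': "0 < (1 - t) * C + t * D" using assms(1-4) by (simp add: add_pos_nonneg)
  show ?thesis
  proof (cases "E' = \<infinity>")
    case True
    with assms(1) C' E show ?thesis by (simp add: ennreal_top_divide divide_ennreal)
  next
    case False
    then obtain e' where E': "E' = ennreal e'" "0 \<le> e'" by (cases E') auto
    have "ennreal ((1 - t) * e + G) \<le> ennreal e'"
      using assms(4,6) E E' \<open>0 < G\<close> by (simp add: ennreal_mult ennreal_plus[symmetric])
    then have "(1 - t) * e + G \<le> e'" using E'(2) by simp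
    then have "((1 - t) * e + G) * C \<le> e' * C" using assms(1) by (intro mult_right_mono) auto
    then have "e * ((1 - t) * C + t * D) < e' * C"
      using assms(7) by (simp add: e_def algebra_simps)
    then have "e / C < e' / ((1 - t) * C + t * D)"
      using assms(1) C' by (simp add: field_simps)
    then show ?thesis
      using E E' assms(1) C' by (simp add: divide_ennreal ennreal_less_iff)
  qed
qed

theorem lemma2p1:
  fixes I :: "nat set" and c p :: "nat \<Rightarrow> real"
  assumes "admissible_index I"
    and "bdd_below (c ` I)" and "(INF i\<in>I. c i) > 0"
    and "probP I c p"
    and "\<exists>k\<in>I. p k = 0"
  shows "\<exists>p'. probP I c p' \<and> (\<forall>i\<in>I. p' i > 0) \<and> Hrate I c p' \<ge> Hrate I c p
           \<and> (Hrate I c p < \<infinity> \<longrightarrow> Hrate I c p' > Hrate I c p)"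
proof -
  obtain k where k: "k \<in> I" "p k = 0" using assms(5) by blast
  have c_ge: "\<forall>i\<in>I. (INF i\<in>I. c i) \<le> c i" using assms(2) by (auto intro: cINF_lower)
  obtain q where q: "probP I c q" "\<forall>i\<in>I. 0 < q i" using probP_positive_exists k(1) by blast
  define C D where "C = cost I c p" and "D = cost I c q"
  have "0 < C" using cost_ge_lower_bound[OF assms(4) c_ge] assms(3) by (simp add: C_def)
  have "0 \<le> D" using cost_ge_lower_bound[OF q(1), of 0] c_ge assms(3) by (force simp: D_def)
  define e where "e = enn2real (entropy I p)"
  obtain t where t: "0 < t" "t < 1" "t * (e * D / (q k * C)) < - plogp t"
    using exists_neg_plogp_gt_linear by blast
  define p' where "p' = mixture t p q"
  have p': "probP I c p'" "cost I c p' = (1 - t) * C + t * D"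
    using probP_mixture[OF assms(4) q(1)] t by (simp_all add: p'_def C_def D_def)
  have "\<forall>i\<in>I. 0 < p' i"
    using assms(4) q(2) t by (auto simp: p'_def mixture_def probP_def add_nonneg_pos)
  have entropy_p': "ennreal (1 - t) * entropy I p + ennreal (- q k * plogp t) \<le> entropy I p'"
    using entropy_mixture_ge[OF assms(4) q(1) k] t by (simp add: p'_def)
  have "t * e * D < - q k * plogp t * C"
    using t(3) q(2) k(1) \<open>0 < C\<close> by (simp add: pos_divide_less_eq algebra_simps)
  show ?thesis
  proof (cases "entropy I p = \<infinity>")
    case True
    with entropy_p' t(2) have "entropy I p' = \<infinity>" by (simp add: ennreal_mult_top top_unique)
    with True \<open>0 < C\<close> p'(2) have "Hrate I c p = \<infinity>" "Hrate I c p' = \<infinity>"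
      by (simp_all add: Hrate_eq_entropy_divide_cost C_def ennreal_top_divide)
    with p' \<open>\<forall>i\<in>I. 0 < p' i\<close> show ?thesis by auto
  next
    case False
    then have "Hrate I c p < Hrate I c p'"
      using ennreal_divide_less_mixture_divide[OF \<open>0 < C\<close> \<open>0 \<le> D\<close> _ t(2) _ entropy_p'] t(1)
        \<open>t * e * D < _\<close>
      by (simp add: Hrate_eq_entropy_divide_cost p'(2) e_def C_def less_top)
    with p' \<open>\<forall>i\<in>I. 0 < p' i\<close> show ?thesis by (auto simp: less_imp_le)
  qed
qed

end
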